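(* Let $f:\mathbb{R}^n\to\mathbb{R}$ satisfy: (A1) $f\in C^\infty(\mathbb{R}^n)$; (A2) there is $M>0$ with $f(x)>0$ for all $x\notin B(0,M)$; (A3) $\nabla f(p)\neq0$ for all $p\in\mathcal{B}:=\{p:f(p)=0\}$. For $p\in\mathcal{B}$, $r>0$ and $\beta\in(0,1)$ define the open slab \[\Gamma_r(p)=\{p+v:\ v\in\mathbb{R}^n,\ |v^T\nabla f(p)|<\beta r\|\nabla f(p)\|\}.\] Then for each thickness factor $\beta\in(0,1)$ there exists a distance $\sigma_2(\beta)>0$ such that for all $p\in\mathcal{B}$ and all $0<r<\sigma_2(\beta)$, \[\mathcal{B}\cap B(p,r)\subseteq\Gamma_r(p).\]
   Context: $\|\cdot\|$ is the Euclidean norm and $B(p,r)$ the open Euclidean ball of center $p$ and radius $r$. Under (A1)–(A3), $\mathcal{B}$ is a compact smooth hypersurface. *)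

theory Defs
  imports "HOL-Analysis.Analysis"
begin

fun C_k :: "nat \<Rightarrow> ('a::euclidean_space \<Rightarrow> real) \<Rightarrow> bool" where
  "C_k 0 f = continuous_on UNIV f"
| "C_k (Suc k) f = ((\<forall>x. f differentiable (at x)) \<and>
       (\<forall>v. C_k k (\<lambda>x. frechet_derivative f (at x) v)))"

definition C_infinity :: "('a::euclidean_space \<Rightarrow> real) \<Rightarrow> bool" where
  "C_infinity f = (\<forall>k. C_k k f)"

definition grad :: "('a::euclidean_space \<Rightarrow> real) \<Rightarrow> 'a \<Rightarrow> 'a" where
  "grad f p = (\<Sum>b\<in>Basis. frechet_derivative f (at p) b *\<^sub>R b)"

definition Gamma :: "('a::euclidean_space \<Rightarrow> real) \<Rightarrow> real \<Rightarrow> real \<Rightarrow> 'a \<Rightarrow> 'a set" where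
  "Gamma f \<beta> r p = {p + v | v. \<bar>v \<bullet> grad f p\<bar> < \<beta> * r * norm (grad f p)}"

end

theory Submission
  imports Defs
begin

text \<open>
  The zero set is compact and the gradient is continuous, so the gradient norm is bounded
  below on it by some c > 0 and, by uniform continuity, varies by at most \<beta> c on every
  ball of a fixed radius \<sigma> centred on the zero set. Along the segment from p to another
  zero x of f, the mean value inequality applied to f y - \<nabla>f(p) \<bullet> y then gives
  |(x - p) \<bullet> \<nabla>f(p)| \<le> \<beta> c |x - p| < \<beta> r |\<nabla>f(p)|.
\<close>

lemma linear_eq_inner_sum_Basis:
  fixes L :: "'a::euclidean_space \<Rightarrow> real"
  assumes "linear L"
  shows "L v = (\<Sum>b\<in>Basis. L b *\<^sub>R b) \<bullet> v"
proof -
  have "L v = L (\<Sum>b\<in>Basis. (v \<bullet> b) *\<^sub>R b)" by (simp add: euclidean_representation)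
  also have "\<dots> = (\<Sum>b\<in>Basis. (v \<bullet> b) * L b)"
    using assms by (simp add: linear_sum linear_scale)
  also have "\<dots> = (\<Sum>b\<in>Basis. L b *\<^sub>R b) \<bullet> v"
    by (simp add: inner_sum_left inner_commute[of v] mult.commute)
  finally show ?thesis .
qed

lemma has_derivative_grad:
  fixes f :: "'a::euclidean_space \<Rightarrow> real"
  assumes "f differentiable (at x)"
  shows "(f has_derivative (\<lambda>v. grad f x \<bullet> v)) (at x)"
proof -
  have f': "(f has_derivative frechet_derivative f (at x)) (at x)"
    using assms frechet_derivative_works by blast
  have "frechet_derivative f (at x) = (\<lambda>v. grad f x \<bullet> v)"
    unfolding grad_def by (rule ext, rule linear_eq_inner_sum_Basis[OF has_derivative_linear[OF f']])
  with f' show ?thesis by simp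
qed

lemma continuous_on_grad:
  fixes f :: "'a::euclidean_space \<Rightarrow> real"
  assumes "C_k 1 f"
  shows "continuous_on UNIV (grad f)"
  using assms unfolding grad_def by (intro continuous_intros) simp

lemma compact_zero_set:
  fixes f :: "'a::euclidean_space \<Rightarrow> real"
  assumes "continuous_on UNIV f" and "\<forall>x. x \<notin> ball 0 M \<longrightarrow> f x > 0"
  shows "compact {x. f x = 0}"
proof (unfold compact_eq_bounded_closed, intro conjI)
  show "bounded {x. f x = 0}"
    using assms(2) by (intro bounded_subset[OF bounded_ball, of _ 0 M]) force
  show "closed {x. f x = 0}"
    using assms(1) by (simp add: closed_Collect_eq)
qed

lemma continuous_on_uniformly_near_compact:
  fixes g :: "'a::euclidean_space \<Rightarrow> 'b::metric_space"
  assumes "continuous_on UNIV g" and "compact K" and "e > 0"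
  obtains d where "d > 0" "\<And>p y. p \<in> K \<Longrightarrow> dist y p < d \<Longrightarrow> dist (g y) (g p) < e"
proof -
  obtain R where R: "\<And>p. p \<in> K \<Longrightarrow> norm p \<le> R"
    using compact_imp_bounded[OF assms(2)] unfolding bounded_iff by blast
  have "uniformly_continuous_on (cball 0 (R + 1)) g"
    by (intro compact_uniformly_continuous continuous_on_subset[OF assms(1)]) auto
  then obtain d where d: "d > 0"
    "\<And>x x'. x \<in> cball 0 (R + 1) \<Longrightarrow> x' \<in> cball 0 (R + 1) \<Longrightarrow> dist x' x < d \<Longrightarrow>
       dist (g x') (g x) < e"
    unfolding uniformly_continuous_on_def using assms(3) by blast
  show thesis
  proof (rule that[of "min d 1"])
    fix p y assume "p \<in> K" "dist y p < min d 1"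
    moreover have "norm y \<le> norm p + dist y p"
      using norm_triangle_sub[of y p] by (simp add: dist_norm)
    ultimately show "dist (g y) (g p) < e"
      using R[of p] by (intro d(2)) auto
  qed (use d in simp)
qed

lemma abs_inner_grad_le_on_level_set:
  fixes f :: "'a::euclidean_space \<Rightarrow> real"
  assumes "convex S" "x \<in> S" "p \<in> S" "f x = f p"
    and deriv: "\<And>y. y \<in> S \<Longrightarrow> (f has_derivative (\<lambda>v. g y \<bullet> v)) (at y within S)"
    and close: "\<And>y. y \<in> S \<Longrightarrow> norm (g y - g p) \<le> e"
  shows "\<bar>(x - p) \<bullet> g p\<bar> \<le> e * norm (x - p)"
proof -
  define \<phi> where "\<phi> y = f y - g p \<bullet> y" for y
  have "norm (\<phi> x - \<phi> p) \<le> e * norm (x - p)"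
  proof (rule differentiable_bound[OF \<open>convex S\<close>, where f'="\<lambda>y v. (g y - g p) \<bullet> v"])
    fix y assume y: "y \<in> S"
    show "(\<phi> has_derivative (\<lambda>v. (g y - g p) \<bullet> v)) (at y within S)"
      unfolding \<phi>_def inner_diff_left
      by (intro derivative_intros deriv[OF y])
    show "onorm (\<lambda>v. (g y - g p) \<bullet> v) \<le> e"
    proof (rule onorm_le)
      fix v
      have "norm ((g y - g p) \<bullet> v) \<le> norm (g y - g p) * norm v"
        using Cauchy_Schwarz_ineq2 by simp
      also have "\<dots> \<le> e * norm v" using close[OF y] by (simp add: mult_right_mono)
      finally show "norm ((g y - g p) \<bullet> v) \<le> e * norm v" .
    qed
  qed (use assms in auto)
  moreover have "\<phi> x - \<phi> p = - ((x - p) \<bullet> g p)"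
    unfolding \<phi>_def using \<open>f x = f p\<close> by (simp add: inner_diff inner_commute)
  ultimately show ?thesis by simp
qed

lemma compact_norm_bounded_below:
  fixes g :: "'a::topological_space \<Rightarrow> 'b::real_normed_vector"
  assumes "compact S" "continuous_on S g" "\<And>p. p \<in> S \<Longrightarrow> g p \<noteq> 0"
  obtains c where "c > 0" "\<And>p. p \<in> S \<Longrightarrow> c \<le> norm (g p)"
proof (cases "S = {}")
  case False
  obtain q where "q \<in> S" "\<And>p. p \<in> S \<Longrightarrow> norm (g q) \<le> norm (g p)"
    using continuous_attains_inf[OF assms(1) False continuous_on_norm[OF assms(2)]] by blast
  with assms(3) show thesis by (intro that[of "norm (g q)"]) auto
qed (use that[of 1] in simp)

theorem lemma3:
  fixes f :: "'a::euclidean_space \<Rightarrow> real"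
  assumes A1: "C_infinity f"
    and A2: "\<exists>M>0. \<forall>x. x \<notin> ball 0 M \<longrightarrow> f x > 0"
    and A3: "\<forall>p. f p = 0 \<longrightarrow> grad f p \<noteq> 0"
    and beta: "0 < \<beta>" "\<beta> < 1"
  shows "\<exists>\<sigma>>0. \<forall>p r. f p = 0 \<longrightarrow> 0 < r \<longrightarrow> r < \<sigma> \<longrightarrow>
           {x. f x = 0} \<inter> ball p r \<subseteq> Gamma f \<beta> r p"
proof -
  obtain M where M: "\<forall>x. x \<notin> ball 0 M \<longrightarrow> f x > 0" using A2 by blast
  have C1: "C_k 1 f" using A1 unfolding C_infinity_def by blast
  then have diff: "\<And>x. f differentiable (at x)" by simp
  then have "continuous_on UNIV f"
    by (simp add: continuous_at_imp_continuous_on differentiable_imp_continuous_within)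
  then have Z: "compact {x. f x = 0}" using M by (rule compact_zero_set)
  obtain c where c: "c > 0" "\<And>p. f p = 0 \<Longrightarrow> c \<le> norm (grad f p)"
    using compact_norm_bounded_below[OF Z continuous_on_subset[OF continuous_on_grad[OF C1]]] A3
    by auto
  obtain \<sigma> where \<sigma>: "\<sigma> > 0"
    "\<And>p y. f p = 0 \<Longrightarrow> dist y p < \<sigma> \<Longrightarrow> dist (grad f y) (grad f p) < \<beta> * c"
    using continuous_on_uniformly_near_compact[OF continuous_on_grad[OF C1] Z, of "\<beta> * c"]
      beta c by auto
  show ?thesis
  proof (intro exI[of _ \<sigma>] conjI allI impI subsetI)
    fix p r x
    assume p: "f p = 0" and r: "0 < r" "r < \<sigma>" and x: "x \<in> {x. f x = 0} \<inter> ball p r"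
    have "\<bar>(x - p) \<bullet> grad f p\<bar> \<le> \<beta> * c * norm (x - p)"
    proof (rule abs_inner_grad_le_on_level_set[of "ball p r" x p f "grad f"])
      fix y assume "y \<in> ball p r"
      then show "norm (grad f y - grad f p) \<le> \<beta> * c"
        using \<sigma>(2)[OF p, of y] r by (simp add: dist_norm norm_minus_commute)
    qed (use x p r has_derivative_at_withinI[OF has_derivative_grad[OF diff]] in auto)
    also have "\<dots> < \<beta> * c * r"
      using x c beta by (simp add: dist_norm norm_minus_commute)
    also have "\<dots> \<le> \<beta> * r * norm (grad f p)"
      using c(2)[OF p] beta r by simp
    finally show "x \<in> Gamma f \<beta> r p"
      unfolding Gamma_def by (intro CollectI exI[of _ "x - p"]) auto
  qed (rule \<sigma>(1))
qed

end
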